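(* For any object $(E,\sigma)$ of $\mathrm{OS}_B$, every upward-closed subset (ideal) of the poset $E^\star$ is an ordered language on the alphabet $E$.
   Context: An object of $\mathrm{OS}_B$ is a pair $(E,\sigma)$ with $E$ a totally ordered finite set and $\sigma$ an order-reversing involution with a unique fixed point; $-e:=\sigma(e)$. $E^\star$ is the set of finite words in $E$ with the partial order: $e_1\cdots e_m\le f_1\cdots f_n$ iff there is a strictly increasing $\theta:[m]\to[n]$ with $e_i=f_{\theta(i)}$ for all $i$ and, for each $j\in[n]$, some $i$ with $\theta(i)\le j$ and $f_{\theta(i)}\in\{\pm f_j\}$. For a finite set $\Sigma$, a language is a subset of $\Sigma^\star$; the concatenation of two languages is the set of concatenations of a word of the first with a word of the second. The ordered languages on $\Sigma$ form the smallest collection of languages containing all singleton languages $\{w\}$ and all languages $\Pi^\star$ for $\Pi\subset\Sigma$, and closed under finite unions and concatenations. *)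

theory Defs
  imports Main
begin

definition OS_B_obj :: "'a::linorder set \<Rightarrow> ('a \<Rightarrow> 'a) \<Rightarrow> bool" where
  "OS_B_obj E \<sigma> \<longleftrightarrow> finite E
     \<and> (\<forall>e\<in>E. \<sigma> e \<in> E)
     \<and> (\<forall>e\<in>E. \<sigma> (\<sigma> e) = e)
     \<and> (\<forall>e\<in>E. \<forall>f\<in>E. e < f \<longrightarrow> \<sigma> f < \<sigma> e)
     \<and> (\<exists>!e. e \<in> E \<and> \<sigma> e = e)"

definition word_le :: "('a \<Rightarrow> 'a) \<Rightarrow> 'a list \<Rightarrow> 'a list \<Rightarrow> bool" where
  "word_le \<sigma> v w \<longleftrightarrow> (\<exists>\<theta> :: nat \<Rightarrow> nat.
      strict_mono_on {..<length v} \<theta>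
      \<and> (\<forall>i<length v. \<theta> i < length w \<and> v ! i = w ! (\<theta> i))
      \<and> (\<forall>j<length w. \<exists>i<length v. \<theta> i \<le> j \<and> w ! (\<theta> i) \<in> {w ! j, \<sigma> (w ! j)}))"

definition upward_closed :: "'a set \<Rightarrow> ('a \<Rightarrow> 'a) \<Rightarrow> 'a list set \<Rightarrow> bool" where
  "upward_closed E \<sigma> I \<longleftrightarrow> I \<subseteq> lists E
     \<and> (\<forall>v w. v \<in> I \<and> w \<in> lists E \<and> word_le \<sigma> v w \<longrightarrow> w \<in> I)"

definition conc :: "'a list set \<Rightarrow> 'a list set \<Rightarrow> 'a list set" where
  "conc A B = {u @ v | u v. u \<in> A \<and> v \<in> B}"

inductive ordered_language :: "'a set \<Rightarrow> 'a list set \<Rightarrow> bool" for \<Sigma> :: "'a set" where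
  singleton: "w \<in> lists \<Sigma> \<Longrightarrow> ordered_language \<Sigma> {w}"
| star: "\<Pi> \<subseteq> \<Sigma> \<Longrightarrow> ordered_language \<Sigma> (lists \<Pi>)"
| empty: "ordered_language \<Sigma> {}"
| union: "ordered_language \<Sigma> A \<Longrightarrow> ordered_language \<Sigma> B \<Longrightarrow> ordered_language \<Sigma> (A \<union> B)"
| concat: "ordered_language \<Sigma> A \<Longrightarrow> ordered_language \<Sigma> B \<Longrightarrow> ordered_language \<Sigma> (conc A B)"

end

theory Submission
  imports Defs "HOL-Library.Infinite_Set"
begin

text \<open>
  For an involution, the order on words is generated by two moves: append the same letter to
  both words, or append to the larger word a letter x such that x or -x already occurs in it.
  Hence the upward closure of v y is the concatenation of the upward closure of v, the letter
  y, and C*, where C consists of the letters c such that c or -c occurs in v y; so every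
  principal upward closure is an ordered language. A minimal bad sequence argument as in
  Nash-Williams' proof of Higman's lemma, by induction on the size of the alphabet, shows that
  the order is a well-quasi-order. So every ideal has finitely many minimal elements and is
  the finite union of their upward closures.
\<close>

text \<open>The skipped letter is checked against the larger word, not the smaller one; for an
  involution this makes no difference (\<open>signed_emb_covers\<close>), and it is the form the minimal
  bad sequence argument needs.\<close>

inductive signed_emb :: "('a \<Rightarrow> 'a) \<Rightarrow> 'a list \<Rightarrow> 'a list \<Rightarrow> bool" for \<sigma> where
  Nil: "signed_emb \<sigma> [] []"
| snoc: "signed_emb \<sigma> v w \<Longrightarrow> signed_emb \<sigma> (v @ [x]) (w @ [x])"
| snoc_skip: "signed_emb \<sigma> v w \<Longrightarrow> x \<in> set w \<or> \<sigma> x \<in> set w \<Longrightarrow> signed_emb \<sigma> v (w @ [x])"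

lemma signed_emb_refl: "signed_emb \<sigma> w w"
  by (induction w rule: rev_induct) (auto intro: signed_emb.intros)

lemma signed_emb_set: "signed_emb \<sigma> v w \<Longrightarrow> set v \<subseteq> set w"
  by (induction rule: signed_emb.induct) auto

lemma signed_emb_length: "signed_emb \<sigma> v w \<Longrightarrow> length v \<le> length w"
  by (induction rule: signed_emb.induct) auto

lemma signed_emb_length_eq: "signed_emb \<sigma> v w \<Longrightarrow> length v = length w \<Longrightarrow> v = w"
  by (induction rule: signed_emb.induct) (auto dest: signed_emb_length)

lemma signed_emb_Nil_iff: "signed_emb \<sigma> [] w \<longleftrightarrow> w = []"
proof
  show "signed_emb \<sigma> [] w \<Longrightarrow> w = []"
    by (induction "[] :: 'a list" w rule: signed_emb.induct) auto
qed (simp add: signed_emb.Nil)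

lemma signed_emb_trans:
  assumes "signed_emb \<sigma> u v" "signed_emb \<sigma> v w"
  shows "signed_emb \<sigma> u w"
  using assms(2,1)
proof (induction v w arbitrary: u rule: signed_emb.induct)
  case (snoc v w x)
  from snoc.prems show ?case
  proof (cases rule: signed_emb.cases)
    case (snoc u')
    then show ?thesis using snoc.IH by (auto intro: signed_emb.snoc)
  next
    case snoc_skip
    then show ?thesis using snoc.IH signed_emb_set[OF snoc.hyps]
      by (auto intro!: signed_emb.snoc_skip)
  qed simp
qed (auto intro: signed_emb.snoc_skip)

lemma signed_emb_covers:
  assumes "signed_emb \<sigma> v w" "\<forall>e\<in>set w. \<sigma> (\<sigma> e) = e" "x \<in> set w"
  shows "x \<in> set v \<or> \<sigma> x \<in> set v"
  using assms by (induction arbitrary: x rule: signed_emb.induct) fastforce+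

lemma word_le_Nil: "word_le \<sigma> [] []"
  unfolding word_le_def by simp

lemma word_le_Nil_right: "word_le \<sigma> v [] \<Longrightarrow> v = []"
  unfolding word_le_def by fastforce

lemma word_le_snoc:
  assumes "word_le \<sigma> v w"
  shows "word_le \<sigma> (v @ [x]) (w @ [x])"
proof -
  from assms obtain \<theta> where mono: "strict_mono_on {..<length v} \<theta>"
    and match: "\<forall>i<length v. \<theta> i < length w \<and> v ! i = w ! \<theta> i"
    and cover: "\<forall>j<length w. \<exists>i<length v. \<theta> i \<le> j \<and> w ! \<theta> i \<in> {w ! j, \<sigma> (w ! j)}"
    unfolding word_le_def by blast
  define \<theta>' where "\<theta>' = \<theta>(length v := length w)"
  have "strict_mono_on {..<length (v @ [x])} \<theta>'"
    using mono match unfolding \<theta>'_def by (auto simp: less_Suc_eq strict_mono_on_def)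
  moreover have "\<forall>i<length (v @ [x]). \<theta>' i < length (w @ [x]) \<and> (v @ [x]) ! i = (w @ [x]) ! \<theta>' i"
    using match unfolding \<theta>'_def by (auto simp: less_Suc_eq nth_append)
  moreover have "\<exists>i<length (v @ [x]). \<theta>' i \<le> j \<and> (w @ [x]) ! \<theta>' i \<in> {(w @ [x]) ! j, \<sigma> ((w @ [x]) ! j)}"
    if "j < length (w @ [x])" for j
  proof (cases "j < length w")
    case True
    then obtain i where "i < length v" "\<theta> i \<le> j" "w ! \<theta> i \<in> {w ! j, \<sigma> (w ! j)}"
      using cover by blast
    then show ?thesis using True match unfolding \<theta>'_def by (intro exI[of _ i]) (auto simp: nth_append)
  next
    case False
    then show ?thesis using that unfolding \<theta>'_def by (intro exI[of _ "length v"]) (auto simp: nth_append)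
  qed
  ultimately show ?thesis unfolding word_le_def by blast
qed

lemma word_le_snoc_skip:
  assumes "word_le \<sigma> v w" "x \<in> set v \<or> \<sigma> x \<in> set v"
  shows "word_le \<sigma> v (w @ [x])"
proof -
  from assms(1) obtain \<theta> where mono: "strict_mono_on {..<length v} \<theta>"
    and match: "\<forall>i<length v. \<theta> i < length w \<and> v ! i = w ! \<theta> i"
    and cover: "\<forall>j<length w. \<exists>i<length v. \<theta> i \<le> j \<and> w ! \<theta> i \<in> {w ! j, \<sigma> (w ! j)}"
    unfolding word_le_def by blast
  obtain k where k: "k < length v" "v ! k \<in> {x, \<sigma> x}"
    using assms(2) by (auto simp: in_set_conv_nth)
  have "\<forall>i<length v. \<theta> i < length (w @ [x]) \<and> v ! i = (w @ [x]) ! \<theta> i"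
    using match by (auto simp: nth_append)
  moreover have "\<exists>i<length v. \<theta> i \<le> j \<and> (w @ [x]) ! \<theta> i \<in> {(w @ [x]) ! j, \<sigma> ((w @ [x]) ! j)}"
    if "j < length (w @ [x])" for j
  proof (cases "j < length w")
    case True
    then obtain i where "i < length v" "\<theta> i \<le> j" "w ! \<theta> i \<in> {w ! j, \<sigma> (w ! j)}"
      using cover by blast
    then show ?thesis using True match by (intro exI[of _ i]) (auto simp: nth_append)
  next
    case False
    then show ?thesis using that k match by (intro exI[of _ k]) (auto simp: nth_append)
  qed
  ultimately show ?thesis using mono unfolding word_le_def by blast
qed

lemma word_le_of_snoc_witness:
  assumes "strict_mono_on {..<length v} \<theta>"
    and "\<forall>i<length v. \<theta> i < length w \<and> v ! i = (w @ [x]) ! \<theta> i"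
    and "\<forall>j<length w. \<exists>i<length v. \<theta> i \<le> j \<and> (w @ [x]) ! \<theta> i \<in> {(w @ [x]) ! j, \<sigma> ((w @ [x]) ! j)}"
  shows "word_le \<sigma> v w"
  unfolding word_le_def using assms by (intro exI[of _ \<theta>]) (fastforce simp: nth_append)

lemma word_le_snoc_cases:
  assumes "word_le \<sigma> v (w @ [x])"
  shows "(\<exists>v'. v = v' @ [x] \<and> word_le \<sigma> v' w) \<or> (word_le \<sigma> v w \<and> (x \<in> set v \<or> \<sigma> x \<in> set v))"
proof -
  let ?w = "w @ [x]"
  from assms obtain \<theta> where mono: "strict_mono_on {..<length v} \<theta>"
    and match: "\<forall>i<length v. \<theta> i < length ?w \<and> v ! i = ?w ! \<theta> i"
    and cover: "\<forall>j<length ?w. \<exists>i<length v. \<theta> i \<le> j \<and> ?w ! \<theta> i \<in> {?w ! j, \<sigma> (?w ! j)}"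
    unfolding word_le_def by blast
  obtain k where k: "k < length v" "v ! k \<in> {x, \<sigma> x}"
    using cover[rule_format, of "length w"] match by (auto simp: nth_append)
  then have "v \<noteq> []" by auto
  then obtain v' y where v: "v = v' @ [y]" by (meson rev_exhaust)
  have below_last: "\<theta> i < \<theta> (length v')" if "i < length v'" for i
    using mono that v by (auto simp: strict_mono_on_def)
  show ?thesis
  proof (cases "\<theta> (length v') = length w")
    case True
    have "y = x" using match[rule_format, of "length v'"] v True by (auto simp: nth_append)
    moreover have "word_le \<sigma> v' w"
    proof (rule word_le_of_snoc_witness)
      show "strict_mono_on {..<length v'} \<theta>" using mono v by (auto elim: monotone_on_subset)
      show "\<forall>i<length v'. \<theta> i < length w \<and> v' ! i = ?w ! \<theta> i"
      proof (intro allI impI)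
        fix i assume i: "i < length v'"
        then show "\<theta> i < length w \<and> v' ! i = ?w ! \<theta> i"
          using below_last[OF i] True match[rule_format, of i] v by (auto simp: nth_append)
      qed
      show "\<forall>j<length w. \<exists>i<length v'. \<theta> i \<le> j \<and> ?w ! \<theta> i \<in> {?w ! j, \<sigma> (?w ! j)}"
      proof (intro allI impI)
        fix j assume j: "j < length w"
        then obtain i where i: "i < length v" "\<theta> i \<le> j" "?w ! \<theta> i \<in> {?w ! j, \<sigma> (?w ! j)}"
          using cover[rule_format, of j] by auto
        moreover have "i \<noteq> length v'" using i(2) j True by auto
        ultimately show "\<exists>i<length v'. \<theta> i \<le> j \<and> ?w ! \<theta> i \<in> {?w ! j, \<sigma> (?w ! j)}"
          using v by (intro exI[of _ i]) auto
      qed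
    qed
    ultimately show ?thesis using v by blast
  next
    case False
    \<comment> \<open>the appended \<open>x\<close> is skipped, so it is covered by some letter \<open>v ! k\<close>\<close>
    have "\<theta> i < length w" if "i < length v" for i
      using below_last[of i] match[rule_format, of "length v'"] False that v
      by (cases "i = length v'") auto
    then have "word_le \<sigma> v w"
      using mono match cover by (intro word_le_of_snoc_witness) auto
    moreover have "x \<in> set v \<or> \<sigma> x \<in> set v" using nth_mem[OF k(1)] k(2) by auto
    ultimately show ?thesis by blast
  qed
qed

lemma word_le_imp_signed_emb: "word_le \<sigma> v w \<Longrightarrow> signed_emb \<sigma> v w"
proof (induction w arbitrary: v rule: rev_induct)
  case Nil
  then show ?case by (auto dest: word_le_Nil_right intro: signed_emb.Nil)
next
  case (snoc x w)
  consider (matched) v' where "v = v' @ [x]" "word_le \<sigma> v' w"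
    | (skipped) "word_le \<sigma> v w" "x \<in> set v \<or> \<sigma> x \<in> set v"
    using word_le_snoc_cases[OF snoc.prems] by blast
  then show ?case
  proof cases
    case matched
    then show ?thesis using snoc.IH by (simp add: signed_emb.snoc)
  next
    case skipped
    then have "signed_emb \<sigma> v w" using snoc.IH by blast
    moreover have "x \<in> set w \<or> \<sigma> x \<in> set w" using skipped(2) signed_emb_set[OF calculation] by blast
    ultimately show ?thesis by (rule signed_emb.snoc_skip)
  qed
qed

lemma signed_emb_imp_word_le:
  assumes "signed_emb \<sigma> v w" "\<forall>e\<in>set w. \<sigma> (\<sigma> e) = e"
  shows "word_le \<sigma> v w"
  using assms
proof (induction rule: signed_emb.induct)
  case Nil
  show ?case by (rule word_le_Nil)
next
  case (snoc v w x)
  then show ?case by (simp add: word_le_snoc)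
next
  case (snoc_skip v w x)
  have "x \<in> set v \<or> \<sigma> x \<in> set v"
    using snoc_skip.hyps(2) signed_emb_covers[OF snoc_skip.hyps(1)] snoc_skip.prems by force
  then show ?case using snoc_skip by (simp add: word_le_snoc_skip)
qed

lemma word_le_iff_signed_emb:
  "\<forall>e\<in>set w. \<sigma> (\<sigma> e) = e \<Longrightarrow> word_le \<sigma> v w \<longleftrightarrow> signed_emb \<sigma> v w"
  using word_le_imp_signed_emb signed_emb_imp_word_le by blast

definition good :: "('b \<Rightarrow> 'b \<Rightarrow> bool) \<Rightarrow> (nat \<Rightarrow> 'b) \<Rightarrow> bool" where
  "good P f \<longleftrightarrow> (\<exists>i j. i < j \<and> P (f i) (f j))"

definition bad_seqs :: "('b \<Rightarrow> 'b \<Rightarrow> bool) \<Rightarrow> 'b set \<Rightarrow> (nat \<Rightarrow> 'b) set" where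
  "bad_seqs P S = {f. (\<forall>i. f i \<in> S) \<and> \<not> good P f}"

text \<open>Nash-Williams' minimal bad sequence: each element has least \<open>\<mu>\<close> among the continuations
  of the previous ones to a bad sequence.\<close>

definition min_bad_next :: "('b \<Rightarrow> 'b \<Rightarrow> bool) \<Rightarrow> 'b set \<Rightarrow> ('b \<Rightarrow> nat) \<Rightarrow> 'b list \<Rightarrow> 'b" where
  "min_bad_next P S \<mu> p = (SOME x. \<exists>g\<in>bad_seqs P S. (\<forall>k<length p. g k = p ! k) \<and> g (length p) = x \<and>
     (\<forall>g'\<in>bad_seqs P S. (\<forall>k<length p. g' k = p ! k) \<longrightarrow> \<mu> x \<le> \<mu> (g' (length p))))"

primrec min_bad_prefix :: "('b \<Rightarrow> 'b \<Rightarrow> bool) \<Rightarrow> 'b set \<Rightarrow> ('b \<Rightarrow> nat) \<Rightarrow> nat \<Rightarrow> 'b list" where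
  "min_bad_prefix P S \<mu> 0 = []"
| "min_bad_prefix P S \<mu> (Suc n) = min_bad_prefix P S \<mu> n @ [min_bad_next P S \<mu> (min_bad_prefix P S \<mu> n)]"

definition min_bad_seq :: "('b \<Rightarrow> 'b \<Rightarrow> bool) \<Rightarrow> 'b set \<Rightarrow> ('b \<Rightarrow> nat) \<Rightarrow> nat \<Rightarrow> 'b" where
  "min_bad_seq P S \<mu> n = min_bad_next P S \<mu> (min_bad_prefix P S \<mu> n)"

lemma min_bad_seq_eq: "min_bad_seq P S \<mu> n = min_bad_next P S \<mu> (map (min_bad_seq P S \<mu>) [0..<n])"
proof -
  have "min_bad_prefix P S \<mu> n = map (min_bad_seq P S \<mu>) [0..<n]"
    by (induction n) (simp_all add: min_bad_seq_def)
  then show ?thesis by (simp add: min_bad_seq_def)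
qed

lemma min_bad_next_spec:
  assumes "\<exists>g\<in>bad_seqs P S. \<forall>k<length p. g k = p ! k"
  shows "\<exists>g\<in>bad_seqs P S. (\<forall>k<length p. g k = p ! k) \<and> g (length p) = min_bad_next P S \<mu> p \<and>
           (\<forall>g'\<in>bad_seqs P S. (\<forall>k<length p. g' k = p ! k) \<longrightarrow> \<mu> (min_bad_next P S \<mu> p) \<le> \<mu> (g' (length p)))"
proof -
  from assms obtain g0 where "g0 \<in> bad_seqs P S \<and> (\<forall>k<length p. g0 k = p ! k)" by blast
  from ex_has_least_nat[of "\<lambda>g. g \<in> bad_seqs P S \<and> (\<forall>k<length p. g k = p ! k)", OF this,
      of "\<lambda>g. \<mu> (g (length p))"]
  obtain g where "g \<in> bad_seqs P S" "\<forall>k<length p. g k = p ! k"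
    "\<forall>g'. g' \<in> bad_seqs P S \<and> (\<forall>k<length p. g' k = p ! k) \<longrightarrow> \<mu> (g (length p)) \<le> \<mu> (g' (length p))"
    by blast
  then have "\<exists>x. \<exists>g\<in>bad_seqs P S. (\<forall>k<length p. g k = p ! k) \<and> g (length p) = x \<and>
     (\<forall>g'\<in>bad_seqs P S. (\<forall>k<length p. g' k = p ! k) \<longrightarrow> \<mu> x \<le> \<mu> (g' (length p)))"
    by blast
  then show ?thesis unfolding min_bad_next_def by (rule someI_ex)
qed

lemma min_bad_seq_spec:
  assumes "\<exists>g\<in>bad_seqs P S. \<forall>k<n. g k = min_bad_seq P S \<mu> k"
  shows "\<exists>g\<in>bad_seqs P S. \<forall>k\<le>n. g k = min_bad_seq P S \<mu> k"
    and "\<And>g. g \<in> bad_seqs P S \<Longrightarrow> \<forall>k<n. g k = min_bad_seq P S \<mu> k \<Longrightarrow>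
           \<mu> (min_bad_seq P S \<mu> n) \<le> \<mu> (g n)"
  using min_bad_next_spec[of P S "map (min_bad_seq P S \<mu>) [0..<n]" \<mu>] assms
  by (auto simp: min_bad_seq_eq[symmetric] le_less)

lemma minimal_bad_seq:
  fixes \<mu> :: "'b \<Rightarrow> nat"
  assumes "bad_seqs P S \<noteq> {}"
  obtains m where "m \<in> bad_seqs P S"
    and "\<And>g n. g \<in> bad_seqs P S \<Longrightarrow> \<forall>k<n. g k = m k \<Longrightarrow> \<mu> (m n) \<le> \<mu> (g n)"
proof
  let ?m = "min_bad_seq P S \<mu>"
  have agree: "\<exists>g\<in>bad_seqs P S. \<forall>k<n. g k = ?m k" for n
  proof (induction n)
    case (Suc n)
    then show ?case using min_bad_seq_spec(1) by (simp add: less_Suc_eq_le)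
  qed (use assms in auto)
  show "?m \<in> bad_seqs P S"
  proof -
    have "?m i \<in> S \<and> (\<forall>j<i. \<not> P (?m j) (?m i))" for i
    proof -
      obtain g where g: "g \<in> bad_seqs P S" "\<forall>k\<le>i. g k = ?m k"
        using min_bad_seq_spec(1)[OF agree] by blast
      from g(1) have "g i \<in> S" "\<forall>j<i. \<not> P (g j) (g i)" unfolding bad_seqs_def good_def by auto
      with g(2) show ?thesis by force
    qed
    then show ?thesis unfolding bad_seqs_def good_def by blast
  qed
  show "\<mu> (?m n) \<le> \<mu> (g n)" if "g \<in> bad_seqs P S" "\<forall>k<n. g k = ?m k" for g n
    using min_bad_seq_spec(2)[OF agree that] .
qed

lemma infinite_pigeonhole_strict_mono:
  assumes "infinite N" "finite (F ` N)"
  obtains \<phi> :: "nat \<Rightarrow> nat" and y where "strict_mono \<phi>" "\<And>k. \<phi> k \<in> N" "\<And>k. F (\<phi> k) = y"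
proof -
  obtain y where "infinite (F -` {y} \<inter> N)" using inf_img_fin_domE'[OF assms(2,1)] by blast
  then obtain \<phi> :: "nat \<Rightarrow> nat" where "strict_mono \<phi>" "\<forall>k. \<phi> k \<in> F -` {y} \<inter> N"
    using infinite_enumerate by blast
  then show ?thesis using that by blast
qed

lemma bad_signed_emb_finite_Nil:
  assumes "\<not> good (signed_emb \<sigma>) f"
  shows "finite {i. f i = []}"
proof -
  have "i = j" if "f i = []" "f j = []" for i j
  proof (rule ccontr)
    assume "i \<noteq> j"
    then have "i < j \<or> j < i" by arith
    then show False using assms that signed_emb.Nil unfolding good_def by fastforce
  qed
  then have "{i. f i = []} \<subseteq> {LEAST i. f i = []}" using LeastI[of "\<lambda>i. f i = []"] by blast
  then show ?thesis by (rule finite_subset) simp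
qed

lemma bad_signed_emb_common_last:
  assumes "finite A" "\<forall>i. m i \<in> lists A" "\<not> good (signed_emb \<sigma>) m"
  obtains \<phi> :: "nat \<Rightarrow> nat" and x t c where "strict_mono \<phi>" "\<And>k. m (\<phi> k) = t k @ [x]"
    "\<And>k. x \<in> set (t k) \<or> \<sigma> x \<in> set (t k) \<longleftrightarrow> c"
proof -
  define N where "N = {i. m i \<noteq> []}"
  have "UNIV = N \<union> {i. m i = []}" unfolding N_def by blast
  then have "infinite N" using bad_signed_emb_finite_Nil[OF assms(3)] by (metis finite_Un infinite_UNIV_nat)
  define F where "F i = (last (m i), last (m i) \<in> set (butlast (m i)) \<or> \<sigma> (last (m i)) \<in> set (butlast (m i)))"
    for i
  have "last (m i) \<in> A" if "i \<in> N" for i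
    using that assms(2) last_in_set[of "m i"] unfolding N_def by blast
  then have "F ` N \<subseteq> A \<times> UNIV" unfolding F_def by auto
  then have "finite (F ` N)" using assms(1) by (meson finite_SigmaI finite_UNIV finite_subset)
  then obtain \<phi> :: "nat \<Rightarrow> nat" and y where \<phi>: "strict_mono \<phi>" "\<And>k. \<phi> k \<in> N" "\<And>k. F (\<phi> k) = y"
    using infinite_pigeonhole_strict_mono[OF \<open>infinite N\<close>] by blast
  obtain x c where "y = (x, c)" by (cases y)
  have "m (\<phi> k) \<noteq> [] \<and> F (\<phi> k) = (x, c)" for k
    using \<phi>(2,3) \<open>y = (x, c)\<close> unfolding N_def by simp
  then have "m (\<phi> k) = butlast (m (\<phi> k)) @ [x]"
    "x \<in> set (butlast (m (\<phi> k))) \<or> \<sigma> x \<in> set (butlast (m (\<phi> k))) \<longleftrightarrow> c" for k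
    unfolding F_def by (metis append_butlast_last_id prod.inject)+
  then show ?thesis using that[of \<phi> "\<lambda>k. butlast (m (\<phi> k))" x c] \<phi>(1) by blast
qed

lemma bad_signed_emb_splice:
  fixes \<phi> :: "nat \<Rightarrow> nat"
  assumes bad: "\<not> good (signed_emb \<sigma>) m" and "strict_mono \<phi>"
    and last: "\<And>k. m (\<phi> k) = t k @ [x]" and covered: "\<And>k. x \<in> set (t k) \<or> \<sigma> x \<in> set (t k)"
  shows "\<not> good (signed_emb \<sigma>) (\<lambda>k. if k < \<phi> 0 then m k else t (k - \<phi> 0))"
proof
  have bad_m: "\<not> signed_emb \<sigma> (m i) (m j)" if "i < j" for i j
    using bad that unfolding good_def by blast
  have mono_\<phi>: "\<phi> a < \<phi> b" if "a < b" for a b using \<open>strict_mono \<phi>\<close> that by (rule strict_monoD)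
  assume "good (signed_emb \<sigma>) (\<lambda>k. if k < \<phi> 0 then m k else t (k - \<phi> 0))"
  then obtain i j where ij: "i < j"
    and emb: "signed_emb \<sigma> (if i < \<phi> 0 then m i else t (i - \<phi> 0)) (if j < \<phi> 0 then m j else t (j - \<phi> 0))"
    unfolding good_def by blast
  consider "j < \<phi> 0" | "i < \<phi> 0" "\<not> j < \<phi> 0" | "\<not> i < \<phi> 0" using ij by linarith
  then show False
  proof cases
    case 1
    then show False using ij emb bad_m by auto
  next
    case 2
    then have "signed_emb \<sigma> (m i) (t (j - \<phi> 0) @ [x])"
      using emb covered by (simp add: signed_emb.snoc_skip)
    then have "signed_emb \<sigma> (m i) (m (\<phi> (j - \<phi> 0)))" by (simp only: last)
    moreover have "i < \<phi> (j - \<phi> 0)"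
      using 2 mono_\<phi>[of 0 "j - \<phi> 0"] by (cases "j - \<phi> 0") auto
    ultimately show False using bad_m by blast
  next
    case 3
    then have "signed_emb \<sigma> (t (i - \<phi> 0) @ [x]) (t (j - \<phi> 0) @ [x])"
      using ij emb by (simp add: signed_emb.snoc)
    then have "signed_emb \<sigma> (m (\<phi> (i - \<phi> 0))) (m (\<phi> (j - \<phi> 0)))" by (simp only: last)
    moreover have "\<phi> (i - \<phi> 0) < \<phi> (j - \<phi> 0)" using 3 ij mono_\<phi> by simp
    ultimately show False using bad_m by blast
  qed
qed

lemma good_signed_emb:
  assumes "finite A" "\<forall>i. f i \<in> lists A"
  shows "good (signed_emb \<sigma>) f"
  using assms
proof (induction "card A" arbitrary: A f rule: less_induct)
  case less
  show ?case
  proof (rule ccontr)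
    assume "\<not> good (signed_emb \<sigma>) f"
    then have "bad_seqs (signed_emb \<sigma>) (lists A) \<noteq> {}" using less.prems unfolding bad_seqs_def by auto
    then obtain m where m: "m \<in> bad_seqs (signed_emb \<sigma>) (lists A)"
      and min: "\<And>g n. g \<in> bad_seqs (signed_emb \<sigma>) (lists A) \<Longrightarrow> \<forall>k<n. g k = m k \<Longrightarrow>
                  length (m n) \<le> length (g n)"
      using minimal_bad_seq[where \<mu> = length] by blast
    then have mA: "\<forall>i. m i \<in> lists A" and bad: "\<not> good (signed_emb \<sigma>) m" unfolding bad_seqs_def by auto
    obtain \<phi> :: "nat \<Rightarrow> nat" and x t c where \<phi>: "strict_mono \<phi>" and last: "\<And>k. m (\<phi> k) = t k @ [x]"
      and cov: "\<And>k. x \<in> set (t k) \<or> \<sigma> x \<in> set (t k) \<longleftrightarrow> c"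
      using bad_signed_emb_common_last[OF less.prems(1) mA bad] by metis
    have "t k @ [x] \<in> lists A" for k using mA by (simp only: last[symmetric])
    then have tA: "t k \<in> lists A" for k by auto
    have xA: "x \<in> A" using \<open>t 0 @ [x] \<in> lists A\<close> by auto
    \<comment> \<open>Either no \<open>t k\<close> contains \<open>x\<close> or \<open>\<sigma> x\<close>, and \<open>t\<close> lives over the smaller alphabet
      \<open>A - {x}\<close>; or all do, and replacing \<open>m (\<phi> k)\<close> by \<open>t k\<close> from position \<open>\<phi> 0\<close> on gives a bad
      sequence that is shorter than \<open>m\<close> at \<open>\<phi> 0\<close>.\<close>
    show False
    proof (cases c)
      case False
      then have "\<forall>k. t k \<in> lists (A - {x})" using tA cov by auto
      moreover have "card (A - {x}) < card A" using less.prems(1) xA by (rule card_Diff1_less)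
      ultimately have "good (signed_emb \<sigma>) t" using less.hyps less.prems(1) by blast
      then obtain i j where "i < j" "signed_emb \<sigma> (t i) (t j)" unfolding good_def by blast
      then have "signed_emb \<sigma> (m (\<phi> i)) (m (\<phi> j))" "\<phi> i < \<phi> j"
        using last \<phi> by (simp_all add: signed_emb.snoc strict_monoD)
      then show False using bad unfolding good_def by blast
    next
      case True
      define h where "h k = (if k < \<phi> 0 then m k else t (k - \<phi> 0))" for k
      have "\<not> good (signed_emb \<sigma>) h"
        unfolding h_def using bad_signed_emb_splice[OF bad \<phi> last] cov True by blast
      then have "h \<in> bad_seqs (signed_emb \<sigma>) (lists A)" using mA tA unfolding bad_seqs_def h_def by auto
      then have "length (m (\<phi> 0)) \<le> length (h (\<phi> 0))" using min[of h "\<phi> 0"] unfolding h_def by simp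
      then show False using last[of 0] unfolding h_def by simp
    qed
  qed
qed

lemma almost_full_wf:
  assumes refl: "\<And>x. x \<in> S \<Longrightarrow> P x x"
    and trans: "\<And>x y z. x \<in> S \<Longrightarrow> y \<in> S \<Longrightarrow> z \<in> S \<Longrightarrow> P x y \<Longrightarrow> P y z \<Longrightarrow> P x z"
    and antisym: "\<And>x y. x \<in> S \<Longrightarrow> y \<in> S \<Longrightarrow> P x y \<Longrightarrow> P y x \<Longrightarrow> x = y"
    and af: "\<And>f. \<forall>i. f i \<in> S \<Longrightarrow> good P f"
  shows "wf {(u, v). u \<in> S \<and> v \<in> S \<and> P u v \<and> u \<noteq> v}"
  unfolding wf_iff_no_infinite_down_chain
proof
  assume "\<exists>f. \<forall>i. (f (Suc i), f i) \<in> {(u, v). u \<in> S \<and> v \<in> S \<and> P u v \<and> u \<noteq> v}"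
  then obtain f where S: "\<And>i. f i \<in> S" and down: "\<And>i. P (f (Suc i)) (f i)"
    and strict: "\<And>i. f (Suc i) \<noteq> f i"
    by blast
  have below: "P (f j) (f i)" if "i \<le> j" for i j
    using that
  proof (induction rule: dec_induct)
    case base
    show ?case by (rule refl[OF S])
  next
    case (step n)
    then show ?case using trans[OF S S S down] by blast
  qed
  obtain i j where "i < j" "P (f i) (f j)" using af[of f] S unfolding good_def by blast
  then have "P (f i) (f (Suc i))" using trans[OF S S S _ below[of "Suc i" j]] by simp
  then have "f (Suc i) = f i" using antisym[OF S S down] by blast
  then show False using strict by blast
qed

lemma almost_full_finite_basis:
  assumes refl: "\<And>x. x \<in> S \<Longrightarrow> P x x"
    and trans: "\<And>x y z. x \<in> S \<Longrightarrow> y \<in> S \<Longrightarrow> z \<in> S \<Longrightarrow> P x y \<Longrightarrow> P y z \<Longrightarrow> P x z"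
    and antisym: "\<And>x y. x \<in> S \<Longrightarrow> y \<in> S \<Longrightarrow> P x y \<Longrightarrow> P y x \<Longrightarrow> x = y"
    and af: "\<And>f. \<forall>i. f i \<in> S \<Longrightarrow> good P f"
    and "I \<subseteq> S"
  obtains M where "finite M" "M \<subseteq> I" "\<And>w. w \<in> I \<Longrightarrow> \<exists>m\<in>M. P m w"
proof -
  define M where "M = {v \<in> I. \<forall>u\<in>I. P u v \<longrightarrow> u = v}"
  have "finite M"
  proof (rule ccontr)
    assume "infinite M"
    then obtain f :: "nat \<Rightarrow> 'a" where "inj f" "range f \<subseteq> M" using infinite_countable_subset by blast
    then have "\<forall>i. f i \<in> S" using \<open>I \<subseteq> S\<close> unfolding M_def by blast
    then obtain i j where "i < j" "P (f i) (f j)" using af unfolding good_def by blast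
    moreover have "f i \<in> I" "f j \<in> M" using \<open>range f \<subseteq> M\<close> unfolding M_def by auto
    ultimately have "f i = f j" unfolding M_def by blast
    then show False using injD[OF \<open>inj f\<close>] \<open>i < j\<close> by blast
  qed
  moreover have "M \<subseteq> I" unfolding M_def by blast
  moreover have "\<exists>m\<in>M. P m w" if "w \<in> I" for w
  proof -
    have "wf {(u, v). u \<in> S \<and> v \<in> S \<and> P u v \<and> u \<noteq> v}"
      by (rule almost_full_wf[OF refl trans antisym af])
    then show ?thesis
      using that
    proof (induction w rule: wf_induct_rule)
      case (less w)
      show ?case
      proof (cases "w \<in> M")
        case True
        then show ?thesis using refl \<open>I \<subseteq> S\<close> less.prems by blast
      next
        case False
        then obtain u where u: "u \<in> I" "P u w" "u \<noteq> w" using less.prems unfolding M_def by blast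
        then obtain m where m: "m \<in> M" "P m u" using less.IH \<open>I \<subseteq> S\<close> less.prems by blast
        have "P m w" using trans[OF _ _ _ m(2) u(2)] m(1) u(1) less.prems \<open>I \<subseteq> S\<close> unfolding M_def by blast
        then show ?thesis using m(1) by blast
      qed
    qed
  qed
  ultimately show thesis by (rule that)
qed

lemma signed_emb_snoc_iff:
  assumes "\<forall>e\<in>set w. \<sigma> (\<sigma> e) = e"
  shows "signed_emb \<sigma> (v @ [y]) w \<longleftrightarrow> (\<exists>w' zs. w = w' @ y # zs \<and> signed_emb \<sigma> v w' \<and>
           (\<forall>z\<in>set zs. z \<in> set (v @ [y]) \<or> \<sigma> z \<in> set (v @ [y])))"
    (is "_ \<longleftrightarrow> (\<exists>w' zs. _ \<and> _ \<and> ?covered zs)")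
proof
  assume "signed_emb \<sigma> (v @ [y]) w"
  then show "\<exists>w' zs. w = w' @ y # zs \<and> signed_emb \<sigma> v w' \<and> ?covered zs"
    using assms
  proof (induction "v @ [y]" w rule: signed_emb.induct)
    case (snoc v' w' x)
    then show ?case by (intro exI[of _ w'] exI[of _ "[]"]) auto
  next
    case (snoc_skip w x)
    then obtain w' zs where w: "w = w' @ y # zs" "signed_emb \<sigma> v w'" "?covered zs" by auto
    have "x \<in> set (v @ [y]) \<or> \<sigma> x \<in> set (v @ [y])"
      using snoc_skip.hyps(3) signed_emb_covers[OF snoc_skip.hyps(1)] snoc_skip.prems by force
    then show ?case using w by (intro exI[of _ w'] exI[of _ "zs @ [x]"]) auto
  qed simp
next
  assume "\<exists>w' zs. w = w' @ y # zs \<and> signed_emb \<sigma> v w' \<and> ?covered zs"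
  then obtain w' zs where w: "w = w' @ y # zs" "signed_emb \<sigma> v w'" "?covered zs" by blast
  have "set (v @ [y]) \<subseteq> set (w' @ [y])" using signed_emb_set[OF w(2)] by auto
  with w(3) have "signed_emb \<sigma> (v @ [y]) (w' @ [y] @ zs)"
  proof (induction zs rule: rev_induct)
    case Nil
    then show ?case using w(2) by (simp add: signed_emb.snoc)
  next
    case (snoc z zs)
    then have "z \<in> set (w' @ [y] @ zs) \<or> \<sigma> z \<in> set (w' @ [y] @ zs)" by auto
    then show ?case using snoc signed_emb.snoc_skip by fastforce
  qed
  then show "signed_emb \<sigma> (v @ [y]) w" using w(1) by simp
qed

definition up_closure :: "'a set \<Rightarrow> ('a \<Rightarrow> 'a) \<Rightarrow> 'a list \<Rightarrow> 'a list set" where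
  "up_closure E \<sigma> v = {w \<in> lists E. word_le \<sigma> v w}"

lemma up_closure_Nil: "up_closure E \<sigma> [] = {[]}"
  unfolding up_closure_def by (auto dest: word_le_imp_signed_emb simp: signed_emb_Nil_iff word_le_Nil)

lemma up_closure_snoc:
  assumes "\<forall>e\<in>E. \<sigma> (\<sigma> e) = e" "y \<in> E"
  shows "up_closure E \<sigma> (v @ [y]) = conc (conc (up_closure E \<sigma> v) {[y]})
           (lists {z \<in> E. z \<in> set (v @ [y]) \<or> \<sigma> z \<in> set (v @ [y])})"
    (is "_ = conc _ (lists ?C)")
proof -
  have le_iff: "word_le \<sigma> u w \<longleftrightarrow> signed_emb \<sigma> u w" if "w \<in> lists E" for u w
    using that assms(1) by (intro word_le_iff_signed_emb) auto
  show ?thesis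
  proof (intro set_eqI iffI)
    fix w assume "w \<in> up_closure E \<sigma> (v @ [y])"
    then have w: "w \<in> lists E" "signed_emb \<sigma> (v @ [y]) w" unfolding up_closure_def using le_iff by blast+
    then obtain w' zs where split: "w = w' @ y # zs" "signed_emb \<sigma> v w'"
      and covered: "\<forall>z\<in>set zs. z \<in> set (v @ [y]) \<or> \<sigma> z \<in> set (v @ [y])"
      using assms(1) signed_emb_snoc_iff[of w \<sigma> v y] by auto
    then have "zs \<in> lists ?C" "w' \<in> up_closure E \<sigma> v"
      using w(1) le_iff unfolding up_closure_def by auto
    moreover have "w = (w' @ [y]) @ zs" using split(1) by simp
    ultimately show "w \<in> conc (conc (up_closure E \<sigma> v) {[y]}) (lists ?C)" unfolding conc_def by blast
  next
    fix w assume "w \<in> conc (conc (up_closure E \<sigma> v) {[y]}) (lists ?C)"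
    then obtain w' zs where w: "w = (w' @ [y]) @ zs" "w' \<in> up_closure E \<sigma> v" "zs \<in> lists ?C"
      unfolding conc_def by blast
    then have "w \<in> lists E" "signed_emb \<sigma> v w'"
      using assms(2) le_iff unfolding up_closure_def by auto
    moreover have "signed_emb \<sigma> (v @ [y]) w"
      using calculation w assms(1) signed_emb_snoc_iff[of w \<sigma> v y] by auto
    ultimately show "w \<in> up_closure E \<sigma> (v @ [y])" using le_iff unfolding up_closure_def by blast
  qed
qed

lemma ordered_language_up_closure:
  assumes "v \<in> lists E" "\<forall>e\<in>E. \<sigma> (\<sigma> e) = e"
  shows "ordered_language E (up_closure E \<sigma> v)"
  using assms(1)
proof (induction v rule: rev_induct)
  case Nil
  then show ?case by (simp add: up_closure_Nil ordered_language.singleton)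
next
  case (snoc y v)
  then show ?case
    by (auto simp: up_closure_snoc assms(2)
        intro!: ordered_language.concat ordered_language.singleton ordered_language.star)
qed

lemma ordered_language_UN:
  assumes "finite M" "\<And>v. v \<in> M \<Longrightarrow> ordered_language \<Sigma> (L v)"
  shows "ordered_language \<Sigma> (\<Union>v\<in>M. L v)"
  using assms by (induction M rule: finite_induct) (auto intro: ordered_language.empty ordered_language.union)

lemma word_le_finite_basis:
  assumes "finite E" "\<forall>e\<in>E. \<sigma> (\<sigma> e) = e" "I \<subseteq> lists E"
  obtains M where "finite M" "M \<subseteq> I" "\<And>w. w \<in> I \<Longrightarrow> \<exists>m\<in>M. word_le \<sigma> m w"
proof -
  have le_iff: "word_le \<sigma> v w \<longleftrightarrow> signed_emb \<sigma> v w" if "w \<in> lists E" for v w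
    using that assms(2) by (intro word_le_iff_signed_emb) auto
  have refl: "word_le \<sigma> u u" if "u \<in> lists E" for u
    using that le_iff signed_emb_refl by blast
  have trans: "word_le \<sigma> u w" if "u \<in> lists E" "v \<in> lists E" "w \<in> lists E"
    "word_le \<sigma> u v" "word_le \<sigma> v w" for u v w
    using that le_iff signed_emb_trans by metis
  have antisym: "u = v" if "u \<in> lists E" "v \<in> lists E" "word_le \<sigma> u v" "word_le \<sigma> v u" for u v
    using that le_iff signed_emb_length signed_emb_length_eq by (metis le_antisym)
  have af: "good (word_le \<sigma>) f" if f: "\<forall>i. f i \<in> lists E" for f
  proof -
    obtain i j where "i < j" "signed_emb \<sigma> (f i) (f j)"
      using good_signed_emb[OF assms(1) f] unfolding good_def by blast
    then show ?thesis using le_iff[of "f j" "f i"] f unfolding good_def by blast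
  qed
  show thesis
  proof (rule almost_full_finite_basis[of "lists E" "word_le \<sigma>" I])
  qed (fact refl trans antisym af assms(3) that)+
qed

lemma upward_closed_eq_UN_up_closure:
  assumes "upward_closed E \<sigma> I" "M \<subseteq> I" "\<And>w. w \<in> I \<Longrightarrow> \<exists>m\<in>M. word_le \<sigma> m w"
  shows "I = (\<Union>m\<in>M. up_closure E \<sigma> m)"
proof (intro set_eqI iffI)
  fix w assume "w \<in> I"
  moreover from this obtain m where "m \<in> M" "word_le \<sigma> m w" using assms(3) by blast
  ultimately show "w \<in> (\<Union>m\<in>M. up_closure E \<sigma> m)"
    using assms(1) unfolding upward_closed_def up_closure_def by blast
next
  fix w assume "w \<in> (\<Union>m\<in>M. up_closure E \<sigma> m)"
  then obtain m where "m \<in> I" "w \<in> lists E" "word_le \<sigma> m w"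
    using assms(2) unfolding up_closure_def by blast
  then show "w \<in> I" using assms(1) unfolding upward_closed_def by blast
qed

theorem mainTheorem8:
  fixes E :: "'a::linorder set" and \<sigma> :: "'a \<Rightarrow> 'a" and I :: "'a list set"
  assumes "OS_B_obj E \<sigma>"
    and "upward_closed E \<sigma> I"
  shows "ordered_language E I"
proof -
  from assms(1) have "finite E" and inv: "\<forall>e\<in>E. \<sigma> (\<sigma> e) = e"
    unfolding OS_B_obj_def by auto
  from assms(2) have "I \<subseteq> lists E" unfolding upward_closed_def by blast
  obtain M where "finite M" "M \<subseteq> I" and basis: "\<And>w. w \<in> I \<Longrightarrow> \<exists>m\<in>M. word_le \<sigma> m w"
    using word_le_finite_basis[OF \<open>finite E\<close> inv \<open>I \<subseteq> lists E\<close>] by metis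
  have "ordered_language E (\<Union>m\<in>M. up_closure E \<sigma> m)"
    using \<open>finite M\<close> \<open>M \<subseteq> I\<close> \<open>I \<subseteq> lists E\<close> inv
    by (intro ordered_language_UN ordered_language_up_closure) auto
  then show ?thesis
    using upward_closed_eq_UN_up_closure[OF assms(2) \<open>M \<subseteq> I\<close> basis] by simp
qed

end
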